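(* Let $E$ and $E^c=\partial\overline{\mathcal{G}}\setminus E$ be nonempty clopen subsets of $\partial\overline{\mathcal{G}}$. Let $f:\overline{\mathcal{G}}\to\mathbb{R}$ be harmonic with $f=C\ge 0$ on $E$ and $f>C$ on $E^c$. Let $\epsilon>0$, and let $t_1,t_2$ be regular values of $f$ with: - $C<t_2<t_1<\min_{x\in E^c}f(x)$; - $d(x,E)<\epsilon$ whenever $f(x)\le t_i$, for $i=1,2$. Let $\mathcal{G}_2=f^{-1}([t_2,t_1])\cap\mathcal{G}$, regarded as a graph after subdividing edges at the (finitely many, interior to edges) points of $f^{-1}(t_1)\cup f^{-1}(t_2)$. Then $\mathcal{G}_2$ is a finite graph containing no boundary vertices of $\mathcal{G}$, and $$\sum_{v\in f^{-1}(t_1)}\partial_\nu f(v)=\sum_{v\in f^{-1}(t_2)}\partial_\nu f(v),$$ where for $v\in f^{-1}(t_i)$ the quantity $\partial_\nu f(v)$ is the derivative of $f$ at $v$ along the edge of $\mathcal{G}_{t_i}=\{f\ge t_i\}$ incident on $v$, in the direction pointing from $v$ into that edge (i.e. $v$ is regarded as a boundary vertex of $\mathcal{G}_{t_i}$).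
   Context: $\mathcal{G}$ is a connected, locally finite metric graph with countable vertex set and countable edge set. Each edge has a positive length and is identified with an interval. $\mathcal{G}$ carries the geodesic distance $d$, and $\overline{\mathcal{G}}$ is its metric completion. A designated set of vertices, containing all vertices of degree $1$, forms the boundary vertices. $\mathcal{G}_{int}$ is $\mathcal{G}$ minus the boundary vertices, and $\partial\overline{\mathcal{G}}=\overline{\mathcal{G}}\setminus\mathcal{G}_{int}$. Standing assumptions: $\overline{\mathcal{G}}$ is compact and $\partial\overline{\mathcal{G}}$ is totally disconnected. Clopen means open and closed in $\partial\overline{\mathcal{G}}$. A function $f:\overline{\mathcal{G}}\to\mathbb{R}$ is harmonic if it is continuous, linear on each edge, and satisfies $\sum_{e\sim v}\partial_\nu f_e(v)=0$ at every interior vertex $v$, where $\partial_\nu f_e(v)$ is the derivative of $f_e$ at $v$ in the direction from $v$ into the edge $e$. A point $x\in\mathcal{G}$ is a critical point of $f$ if $x$ is a vertex or $f'(x)=0$. A number is a critical value if its preimage contains a critical point. Values in the range of $f$ that are not critical values are regular values. *)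

theory Defs
  imports "HOL-Analysis.Analysis" "HOL-Library.Countable"
begin

text \<open>
  Vertices are all elements of a countable type 'v, edges all
  elements of a countable type 'e. Edge e goes from src e to tgt e and has length
  len e > 0; it is identified with the interval [0, len e], where parameter 0 is
  src e and parameter len e is tgt e.
\<close>

datatype ('v, 'e) gpoint = Vert 'v | EPt 'e real

definition gpts :: "('e \<Rightarrow> real) \<Rightarrow> ('v, 'e) gpoint set" where
  "gpts len = range Vert \<union> {EPt e s | e s. 0 < s \<and> s < len e}"

definition ep :: "('e \<Rightarrow> 'v) \<Rightarrow> ('e \<Rightarrow> 'v) \<Rightarrow> ('e \<Rightarrow> real) \<Rightarrow> 'e \<Rightarrow> real \<Rightarrow> ('v, 'e) gpoint" where
  "ep src tgt len e s = (if s = 0 then Vert (src e) else if s = len e then Vert (tgt e) else EPt e s)"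

inductive gwalk :: "('e \<Rightarrow> 'v) \<Rightarrow> ('e \<Rightarrow> 'v) \<Rightarrow> ('e \<Rightarrow> real) \<Rightarrow>
    ('v, 'e) gpoint \<Rightarrow> ('v, 'e) gpoint \<Rightarrow> real \<Rightarrow> bool"
  for src tgt len where
  gwalk_refl: "gwalk src tgt len x x 0"
| gwalk_step: "\<lbrakk>0 \<le> a; a \<le> len e; 0 \<le> b; b \<le> len e;
     gwalk src tgt len (ep src tgt len e b) y c\<rbrakk>
     \<Longrightarrow> gwalk src tgt len (ep src tgt len e a) y (\<bar>a - b\<bar> + c)"

definition gdist :: "('e \<Rightarrow> 'v) \<Rightarrow> ('e \<Rightarrow> 'v) \<Rightarrow> ('e \<Rightarrow> real) \<Rightarrow>
    ('v, 'e) gpoint \<Rightarrow> ('v, 'e) gpoint \<Rightarrow> real" where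
  "gdist src tgt len x y = Inf {c. gwalk src tgt len x y c}"

text \<open>degree, counting a loop twice\<close>
definition degree :: "('e \<Rightarrow> 'v) \<Rightarrow> ('e \<Rightarrow> 'v) \<Rightarrow> 'v \<Rightarrow> nat" where
  "degree src tgt v = card {e. src e = v} + card {e. tgt e = v}"

text \<open>
  Standing setting: connected, locally finite metric graph with positive edge
  lengths, boundary vertex set B containing all degree-1 vertices, and a
  metric completion (\<iota>, 'c): 'c is a complete metric space, \<iota> is an isometric
  embedding of the graph (with geodesic distance) with dense image.
\<close>

definition G_int :: "('e \<Rightarrow> real) \<Rightarrow> 'v set \<Rightarrow> ('v, 'e) gpoint set" where
  "G_int len B = gpts len - Vert ` B"

definition bdry :: "('e \<Rightarrow> real) \<Rightarrow> 'v set \<Rightarrow> (('v, 'e) gpoint \<Rightarrow> 'c) \<Rightarrow> 'c set" where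
  "bdry len B \<iota> = UNIV - \<iota> ` G_int len B"

definition totally_disconnected :: "'a::topological_space set \<Rightarrow> bool" where
  "totally_disconnected S \<longleftrightarrow> (\<forall>T \<subseteq> S. connected T \<longrightarrow> (\<exists>a. T \<subseteq> {a}))"

definition metric_graph_setting ::
  "('e::countable \<Rightarrow> 'v::countable) \<Rightarrow> ('e \<Rightarrow> 'v) \<Rightarrow> ('e \<Rightarrow> real) \<Rightarrow> 'v set \<Rightarrow>
   (('v, 'e) gpoint \<Rightarrow> 'c::metric_space) \<Rightarrow> bool" where
  "metric_graph_setting src tgt len B \<iota> \<longleftrightarrow>
     (\<forall>e. 0 < len e)
   \<and> (\<forall>v. finite {e. src e = v} \<and> finite {e. tgt e = v})
   \<and> (\<forall>x\<in>gpts len. \<forall>y\<in>gpts len. \<exists>c. gwalk src tgt len x y c)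
   \<and> {v. degree src tgt v = 1} \<subseteq> B
   \<and> (\<forall>x\<in>gpts len. \<forall>y\<in>gpts len. dist (\<iota> x) (\<iota> y) = gdist src tgt len x y)
   \<and> closure (\<iota> ` gpts len) = UNIV
   \<and> complete (UNIV :: 'c set)
   \<and> compact (UNIV :: 'c set)
   \<and> totally_disconnected (bdry len B \<iota>)"

definition slope :: "('e \<Rightarrow> 'v) \<Rightarrow> ('e \<Rightarrow> 'v) \<Rightarrow> ('e \<Rightarrow> real) \<Rightarrow>
    (('v, 'e) gpoint \<Rightarrow> 'c) \<Rightarrow> ('c \<Rightarrow> real) \<Rightarrow> 'e \<Rightarrow> real" where
  "slope src tgt len \<iota> f e = (f (\<iota> (Vert (tgt e))) - f (\<iota> (Vert (src e)))) / len e"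

text \<open>harmonic: continuous, linear on each edge, Kirchhoff condition at interior
  vertices; the outward-into-edge derivative is +slope at the source end and
  -slope at the target end.\<close>
definition harmonic ::
  "('e \<Rightarrow> 'v) \<Rightarrow> ('e \<Rightarrow> 'v) \<Rightarrow> ('e \<Rightarrow> real) \<Rightarrow> 'v set \<Rightarrow>
   (('v, 'e) gpoint \<Rightarrow> 'c::metric_space) \<Rightarrow> ('c \<Rightarrow> real) \<Rightarrow> bool" where
  "harmonic src tgt len B \<iota> f \<longleftrightarrow>
     continuous_on UNIV f
   \<and> (\<forall>e. \<exists>a b. \<forall>s\<in>{0..len e}. f (\<iota> (ep src tgt len e s)) = a + b * s)
   \<and> (\<forall>v. v \<notin> B \<longrightarrow>
        (\<Sum>e\<in>{e. src e = v}. slope src tgt len \<iota> f e)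
      + (\<Sum>e\<in>{e. tgt e = v}. - slope src tgt len \<iota> f e) = 0)"

definition critical_point ::
  "('e \<Rightarrow> 'v) \<Rightarrow> ('e \<Rightarrow> 'v) \<Rightarrow> ('e \<Rightarrow> real) \<Rightarrow>
   (('v, 'e) gpoint \<Rightarrow> 'c) \<Rightarrow> ('c \<Rightarrow> real) \<Rightarrow> ('v, 'e) gpoint \<Rightarrow> bool" where
  "critical_point src tgt len \<iota> f x \<longleftrightarrow>
     x \<in> gpts len \<and>
     (case x of Vert v \<Rightarrow> True | EPt e s \<Rightarrow> slope src tgt len \<iota> f e = 0)"

definition regular_value ::
  "('e \<Rightarrow> 'v) \<Rightarrow> ('e \<Rightarrow> 'v) \<Rightarrow> ('e \<Rightarrow> real) \<Rightarrow>
   (('v, 'e) gpoint \<Rightarrow> 'c) \<Rightarrow> ('c \<Rightarrow> real) \<Rightarrow> real \<Rightarrow> bool" where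
  "regular_value src tgt len \<iota> f t \<longleftrightarrow>
     t \<in> range f \<and>
     \<not> (\<exists>x. critical_point src tgt len \<iota> f x \<and> f (\<iota> x) = t)"

definition level :: "('e \<Rightarrow> real) \<Rightarrow> (('v, 'e) gpoint \<Rightarrow> 'c) \<Rightarrow> ('c \<Rightarrow> real) \<Rightarrow> real \<Rightarrow> ('v, 'e) gpoint set" where
  "level len \<iota> f t = {x \<in> gpts len. f (\<iota> x) = t}"

text \<open>For a point x = EPt e s with f x = t: derivative of f at x along the edge
  of {f \<ge> t} incident on x, in the direction pointing from x into that edge.
  The direction is +1 (increasing parameter) if points just to the right lie in
  {f \<ge> t}, otherwise -1.\<close>
definition level_flux ::
  "('e \<Rightarrow> 'v) \<Rightarrow> ('e \<Rightarrow> 'v) \<Rightarrow> ('e \<Rightarrow> real) \<Rightarrow>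
   (('v, 'e) gpoint \<Rightarrow> 'c) \<Rightarrow> ('c \<Rightarrow> real) \<Rightarrow> real \<Rightarrow> ('v, 'e) gpoint \<Rightarrow> real" where
  "level_flux src tgt len \<iota> f t x =
     (case x of Vert v \<Rightarrow> 0
      | EPt e s \<Rightarrow>
          (if eventually (\<lambda>h. t \<le> f (\<iota> (ep src tgt len e (s + h)))) (at_right 0)
           then slope src tgt len \<iota> f e else - slope src tgt len \<iota> f e))"

end

theory Submission
  imports Defs
begin

text \<open>
  The slab \<open>t2 \<le> f \<le> t1\<close> is closed, hence compact, in the completion, and it avoids the
  boundary because \<open>f < t2\<close> on \<open>E\<close> and \<open>f > t1\<close> on its complement. Every graph point has
  a ball meeting only finitely many edges, so by compactness the slab meets only finitely many
  vertices and edges. On each edge \<open>f\<close> is linear; at a regular level \<open>t\<close> the level set has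
  exactly one point on each edge crossing \<open>t\<close>, where the flux is the absolute value of the
  slope. Summing Kirchhoff's law over the vertices with \<open>t2 < f < t1\<close>, all of which are
  interior, every edge contributes its flux through level \<open>t1\<close> minus its flux through level
  \<open>t2\<close>, so the two total fluxes agree.
\<close>

lemma ep_eq_EPtD:
  assumes "ep src tgt len e s = EPt e' s'"
  shows "e' = e \<and> s' = s \<and> s \<noteq> 0 \<and> s \<noteq> len e"
  using assms unfolding ep_def by (auto split: if_splits)

lemma ep_eq_VertD:
  assumes "ep src tgt len e s = Vert v"
  shows "s = 0 \<and> v = src e \<or> s = len e \<and> s \<noteq> 0 \<and> v = tgt e"
  using assms unfolding ep_def by (auto split: if_splits)

lemma ep_interior: "0 < s \<Longrightarrow> s < len e \<Longrightarrow> ep src tgt len e s = EPt e s"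
  unfolding ep_def by auto

lemma Vert_in_gpts [simp]: "Vert v \<in> gpts len"
  unfolding gpts_def by simp

lemma gwalk_nonneg: "gwalk src tgt len x y c \<Longrightarrow> 0 \<le> c"
  by (induction rule: gwalk.induct) auto

lemma gwalk_to_Vert_short:
  fixes src tgt :: "'e \<Rightarrow> 'v"
  assumes "gwalk src tgt len x (Vert v) c" "c < r"
    and short: "\<And>e. src e = v \<or> tgt e = v \<Longrightarrow> r \<le> len e"
  shows "x = Vert v \<or> (\<exists>e s. 0 \<le> s \<and> s \<le> len e \<and> x = ep src tgt len e s \<and>
          (src e = v \<and> s \<le> c \<or> tgt e = v \<and> len e - s \<le> c))"
  using assms(1,2)
proof (induction x "Vert v :: ('v, 'e) gpoint" c rule: gwalk.induct)
  case gwalk_refl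
  then show ?case by simp
next
  case (gwalk_step a e b c)
  have "0 \<le> c" using gwalk_step.hyps(5) by (rule gwalk_nonneg)
  let ?y = "ep src tgt len e b"
  have "src e = v \<and> b \<le> c \<or> tgt e = v \<and> len e - b \<le> c"
  proof (cases "?y = Vert v")
    case True
    then show ?thesis using \<open>0 \<le> c\<close> by (auto dest!: ep_eq_VertD)
  next
    case False
    with gwalk_step obtain e' s where s: "0 \<le> s" "s \<le> len e'"
      "?y = ep src tgt len e' s" "src e' = v \<and> s \<le> c \<or> tgt e' = v \<and> len e' - s \<le> c"
      by fastforce
    have "r \<le> len e'" using s(4) short by blast
    with s False gwalk_step.prems have "0 < s \<and> s < len e'"
      by (auto simp: ep_def split: if_splits)
    then have "e' = e \<and> s = b" using s(3) by (auto simp: ep_interior dest!: ep_eq_EPtD)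
    then show ?thesis using s(4) by blast
  qed
  then show ?case using gwalk_step.hyps(1,2)
    by (intro disjI2 exI[of _ e] exI[of _ a]) auto
qed

lemma gwalk_to_EPt_short:
  fixes src tgt :: "'e \<Rightarrow> 'v"
  assumes "gwalk src tgt len x (EPt e0 s0) c" "c < s0" "c < len e0 - s0"
  shows "\<exists>s. 0 \<le> s \<and> s \<le> len e0 \<and> x = ep src tgt len e0 s \<and> \<bar>s - s0\<bar> \<le> c"
  using assms
proof (induction x "EPt e0 s0 :: ('v, 'e) gpoint" c rule: gwalk.induct)
  case gwalk_refl
  then show ?case by (intro exI[of _ s0]) (auto simp: ep_interior)
next
  case (gwalk_step a e b c)
  have "0 \<le> c" using gwalk_step.hyps(5) by (rule gwalk_nonneg)
  with gwalk_step obtain s where s: "ep src tgt len e b = ep src tgt len e0 s" "\<bar>s - s0\<bar> \<le> c"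
    by fastforce
  with gwalk_step.prems have "ep src tgt len e b = EPt e0 s" by (simp add: ep_interior)
  from ep_eq_EPtD[OF this] have "e0 = e" "s = b" by auto
  then show ?case using gwalk_step.hyps(1,2) s(2) by (intro exI[of _ a]) auto
qed

lemma secant_slope_sign:
  fixes a b m L :: real
  assumes "0 < L" "m * L = b - a"
  shows "a < b \<longleftrightarrow> 0 < m" "b < a \<longleftrightarrow> m < 0"
proof -
  have "0 < m * L \<longleftrightarrow> 0 < m" "m * L < 0 \<longleftrightarrow> m < 0"
    using assms(1) by (simp_all add: zero_less_mult_iff mult_less_0_iff)
  then show "a < b \<longleftrightarrow> 0 < m" "b < a \<longleftrightarrow> m < 0" using assms(2) by linarith+
qed

lemma linear_crossing_iff:
  fixes a b m L t :: real
  assumes "0 < L" "m * L = b - a"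
  shows "min a b < t \<and> t < max a b \<longleftrightarrow> m \<noteq> 0 \<and> 0 < (t - a) / m \<and> (t - a) / m < L"
proof (cases "0 < m")
  case True
  then have "(t - a) / m < L \<longleftrightarrow> t < b" using assms(2) by (simp add: pos_divide_less_eq algebra_simps)
  then show ?thesis using True secant_slope_sign[OF assms] by (auto simp: zero_less_divide_iff)
next
  case False
  then have "m \<noteq> 0 \<Longrightarrow> (t - a) / m < L \<longleftrightarrow> b < t"
    using assms(2) by (simp add: neg_divide_less_eq algebra_simps)
  then show ?thesis using False secant_slope_sign[OF assms] by (auto simp: zero_less_divide_iff)
qed

text \<open>An edge with end values \<open>a\<close>, \<open>b\<close> and slope \<open>m\<close> contributes the left-hand side to the
  Kirchhoff sum over the vertices with value in \<open>(t2, t1)\<close>.\<close>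

lemma slab_outflow_eq_crossings:
  fixes a b m L t1 t2 :: real
  assumes "0 < L" "m * L = b - a" "t2 < t1" "a \<notin> {t1, t2}" "b \<notin> {t1, t2}"
  shows "(if t2 < a \<and> a < t1 then m else 0) - (if t2 < b \<and> b < t1 then m else 0)
    = (if min a b < t1 \<and> t1 < max a b then \<bar>m\<bar> else 0)
    - (if min a b < t2 \<and> t2 < max a b then \<bar>m\<bar> else 0)"
  using secant_slope_sign[OF assms(1,2)] assms(3-5) by (cases a b rule: linorder_cases) auto

lemma regular_value_Vert:
  "regular_value src tgt len \<iota> f t \<Longrightarrow> f (\<iota> (Vert v)) \<noteq> t"
  unfolding regular_value_def critical_point_def by auto

lemma regular_value_slope:
  assumes "regular_value src tgt len \<iota> f t" "0 < s" "s < len e" "f (\<iota> (EPt e s)) = t"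
  shows "slope src tgt len \<iota> f e \<noteq> 0"
proof
  assume "slope src tgt len \<iota> f e = 0"
  then have "critical_point src tgt len \<iota> f (EPt e s)"
    using assms(2,3) unfolding critical_point_def gpts_def by simp
  then show False using assms(1,4) unfolding regular_value_def by blast
qed

locale metric_graph =
  fixes src tgt :: "'e::countable \<Rightarrow> 'v::countable"
    and len :: "'e \<Rightarrow> real" and B :: "'v set"
    and \<iota> :: "('v, 'e) gpoint \<Rightarrow> 'c::metric_space"
  assumes setting: "metric_graph_setting src tgt len B \<iota>"
begin

lemma len_pos: "0 < len e"
  using setting unfolding metric_graph_setting_def by blast

lemma finite_edges_from: "finite {e. src e = v}"
  and finite_edges_to: "finite {e. tgt e = v}"
  using setting unfolding metric_graph_setting_def by blast+

lemma dist_iota: "x \<in> gpts len \<Longrightarrow> y \<in> gpts len \<Longrightarrow> dist (\<iota> x) (\<iota> y) = gdist src tgt len x y"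
  using setting unfolding metric_graph_setting_def by blast

lemma compact_completion: "compact (UNIV :: 'c set)"
  using setting unfolding metric_graph_setting_def by blast

lemma gdist_less_imp_gwalk:
  assumes "x \<in> gpts len" "y \<in> gpts len" "gdist src tgt len x y < r"
  obtains c where "c < r" "gwalk src tgt len x y c"
proof -
  have "{c. gwalk src tgt len x y c} \<noteq> {}"
    using setting assms(1,2) unfolding metric_graph_setting_def by blast
  from cInf_lessD[OF this assms(3)[unfolded gdist_def]] show ?thesis using that by blast
qed

lemma incident_edges_len_bound:
  obtains r where "0 < r" "\<And>e. src e = v \<or> tgt e = v \<Longrightarrow> r \<le> len e"
proof -
  have "finite ({e. src e = v} \<union> {e. tgt e = v})"
    using finite_edges_from finite_edges_to by blast
  then show ?thesis
    using that[of "Min (insert 1 (len ` ({e. src e = v} \<union> {e. tgt e = v})))"] len_pos by auto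
qed

lemma gdist_eq_0_Vert:
  assumes z: "z \<in> gpts len" and "gdist src tgt len z (Vert v) = 0"
  shows "z = Vert v"
proof (rule ccontr)
  assume "z \<noteq> Vert v"
  obtain r where r: "0 < r" "\<And>e. src e = v \<or> tgt e = v \<Longrightarrow> r \<le> len e"
    using incident_edges_len_bound[where v = v] by blast
  define r' where "r' = (case z of EPt e s \<Rightarrow> min r (min s (len e - s)) | Vert w \<Rightarrow> r)"
  have "0 < r'" using z r(1) unfolding r'_def gpts_def by (auto split: gpoint.splits)
  then obtain c where c: "c < r'" "gwalk src tgt len z (Vert v) c"
    using gdist_less_imp_gwalk[OF z Vert_in_gpts[of v]] assms(2) by metis
  then have "c < r" unfolding r'_def by (auto split: gpoint.splits)
  from gwalk_to_Vert_short[OF c(2) this r(2)] \<open>z \<noteq> Vert v\<close> obtain e s where es: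
    "z = ep src tgt len e s" "src e = v \<and> s \<le> c \<or> tgt e = v \<and> len e - s \<le> c"
    by blast
  have "r \<le> len e" using es(2) r(2) by blast
  show False
  proof (cases z)
    case (Vert w)
    with es(1) have "ep src tgt len e s = Vert w" by simp
    from ep_eq_VertD[OF this] show False
      using es(2) Vert \<open>z \<noteq> Vert v\<close> \<open>c < r\<close> \<open>r \<le> len e\<close> by auto
  next
    case (EPt e' s')
    with es(1) have "ep src tgt len e s = EPt e' s'" by simp
    from ep_eq_EPtD[OF this] show False using es(2) EPt c(1) unfolding r'_def by auto
  qed
qed

lemma iota_Vert_in_bdry:
  assumes "v \<in> B"
  shows "\<iota> (Vert v) \<in> bdry len B \<iota>"
  unfolding bdry_def
proof (intro DiffI UNIV_I notI)
  assume "\<iota> (Vert v) \<in> \<iota> ` G_int len B"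
  then obtain z where z: "z \<in> gpts len" "z \<notin> Vert ` B" "\<iota> z = \<iota> (Vert v)"
    unfolding G_int_def by auto
  then have "gdist src tgt len z (Vert v) = 0" using dist_iota[OF z(1), of "Vert v"] by simp
  then show False using gdist_eq_0_Vert[OF z(1)] z(2) assms by blast
qed

lemma finite_edges_from_set: "finite V \<Longrightarrow> finite {e. src e \<in> V}"
  and finite_edges_to_set: "finite V \<Longrightarrow> finite {e. tgt e \<in> V}"
proof -
  have "{e. src e \<in> V} = (\<Union>v\<in>V. {e. src e = v})" "{e. tgt e \<in> V} = (\<Union>v\<in>V. {e. tgt e = v})"
    by blast+
  then show "finite V \<Longrightarrow> finite {e. src e \<in> V}" "finite V \<Longrightarrow> finite {e. tgt e \<in> V}"
    using finite_edges_from finite_edges_to by simp_all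
qed

definition edge_points :: "'e set \<Rightarrow> ('v, 'e) gpoint set" where
  "edge_points F = {ep src tgt len e s | e s. e \<in> F \<and> 0 \<le> s \<and> s \<le> len e}"

definition finitely_covered :: "('v, 'e) gpoint set \<Rightarrow> bool" where
  "finitely_covered A \<longleftrightarrow> (\<exists>Y F. finite Y \<and> finite F \<and> A \<subseteq> Y \<union> edge_points F)"

lemma finitely_covered_subset: "finitely_covered A \<Longrightarrow> A' \<subseteq> A \<Longrightarrow> finitely_covered A'"
  unfolding finitely_covered_def by (meson subset_trans)

lemma edge_points_mono: "F \<subseteq> F' \<Longrightarrow> edge_points F \<subseteq> edge_points F'"
  unfolding edge_points_def by blast

lemma finitely_covered_Un:
  assumes "finitely_covered A" "finitely_covered A'"
  shows "finitely_covered (A \<union> A')"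
proof -
  obtain Y F where "finite Y" "finite F" "A \<subseteq> Y \<union> edge_points F"
    using assms(1) unfolding finitely_covered_def by blast
  moreover obtain Y' F' where "finite Y'" "finite F'" "A' \<subseteq> Y' \<union> edge_points F'"
    using assms(2) unfolding finitely_covered_def by blast
  moreover have "edge_points F \<subseteq> edge_points (F \<union> F')" "edge_points F' \<subseteq> edge_points (F \<union> F')"
    by (simp_all add: edge_points_mono)
  ultimately have "finite (Y \<union> Y')" "finite (F \<union> F')" "A \<union> A' \<subseteq> (Y \<union> Y') \<union> edge_points (F \<union> F')"
    by auto
  then show ?thesis unfolding finitely_covered_def by blast
qed

lemma finitely_covered_Union:
  "finite \<A> \<Longrightarrow> (\<And>A. A \<in> \<A> \<Longrightarrow> finitely_covered A) \<Longrightarrow> finitely_covered (\<Union>\<A>)"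
proof (induction rule: finite_induct)
  case empty
  show ?case unfolding finitely_covered_def by (intro exI[of _ "{}"]) simp
next
  case (insert A \<A>)
  then have "finitely_covered A" "finitely_covered (\<Union>\<A>)" by simp_all
  then show ?case by (simp add: finitely_covered_Un)
qed

lemma gdist_ball_finitely_covered:
  assumes y: "y \<in> gpts len"
  obtains r where "0 < r" "finitely_covered {x \<in> gpts len. gdist src tgt len x y < r}"
proof (cases y)
  case (Vert v)
  obtain r where r: "0 < r" "\<And>e. src e = v \<or> tgt e = v \<Longrightarrow> r \<le> len e"
    using incident_edges_len_bound[where v = v] by blast
  let ?F = "{e. src e = v} \<union> {e. tgt e = v}"
  have "{x \<in> gpts len. gdist src tgt len x y < r} \<subseteq> {y} \<union> edge_points ?F"
  proof
    fix x assume "x \<in> {x \<in> gpts len. gdist src tgt len x y < r}"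
    then obtain c where "c < r" "gwalk src tgt len x (Vert v) c"
      using gdist_less_imp_gwalk y Vert by blast
    from gwalk_to_Vert_short[OF this(2,1) r(2)] show "x \<in> {y} \<union> edge_points ?F"
      using Vert unfolding edge_points_def by blast
  qed
  moreover have "finite ?F" using finite_edges_from finite_edges_to by blast
  ultimately have "finitely_covered {x \<in> gpts len. gdist src tgt len x y < r}"
    unfolding finitely_covered_def by (intro exI[of _ "{y}"] exI[of _ ?F]) simp
  with r(1) show thesis by (rule that)
next
  case (EPt e0 s0)
  then have "0 < s0" "s0 < len e0" using y unfolding gpts_def by auto
  have "{x \<in> gpts len. gdist src tgt len x y < min s0 (len e0 - s0)} \<subseteq> edge_points {e0}"
  proof
    fix x assume "x \<in> {x \<in> gpts len. gdist src tgt len x y < min s0 (len e0 - s0)}"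
    then obtain c where "c < min s0 (len e0 - s0)" "gwalk src tgt len x (EPt e0 s0) c"
      using gdist_less_imp_gwalk y EPt by blast
    with gwalk_to_EPt_short show "x \<in> edge_points {e0}"
      unfolding edge_points_def by fastforce
  qed
  then have "finitely_covered {x \<in> gpts len. gdist src tgt len x y < min s0 (len e0 - s0)}"
    unfolding finitely_covered_def by (intro exI[of _ "{}"] exI[of _ "{e0}"]) simp
  moreover have "0 < min s0 (len e0 - s0)" using \<open>0 < s0\<close> \<open>s0 < len e0\<close> by simp
  ultimately show thesis by (intro that)
qed

lemma compact_finitely_covered:
  assumes "compact S" "S \<subseteq> \<iota> ` gpts len"
  shows "finitely_covered {x \<in> gpts len. \<iota> x \<in> S}"
proof -
  \<comment> \<open>Heine--Borel for this family avoids choosing radii and edge sets for each point.\<close>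
  define \<U> where "\<U> = {U. open U \<and> finitely_covered {x \<in> gpts len. \<iota> x \<in> U}}"
  have "S \<subseteq> \<Union>\<U>"
  proof
    fix p assume "p \<in> S"
    then obtain y where y: "y \<in> gpts len" "p = \<iota> y" using assms(2) by blast
    obtain r where r: "0 < r" "finitely_covered {x \<in> gpts len. gdist src tgt len x y < r}"
      using gdist_ball_finitely_covered[OF y(1)] by blast
    have "{x \<in> gpts len. \<iota> x \<in> ball p r} = {x \<in> gpts len. gdist src tgt len x y < r}"
      using dist_iota y by (auto simp: dist_commute)
    with r have "ball p r \<in> \<U>" unfolding \<U>_def by simp
    then show "p \<in> \<Union>\<U>" using r(1) by (meson UnionI centre_in_ball)
  qed
  moreover have "\<And>U. U \<in> \<U> \<Longrightarrow> open U" unfolding \<U>_def by blast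
  ultimately obtain \<U>' where \<U>': "\<U>' \<subseteq> \<U>" "finite \<U>'" "S \<subseteq> \<Union>\<U>'"
    using compactE[OF assms(1)] by metis
  then have "finitely_covered (\<Union>U\<in>\<U>'. {x \<in> gpts len. \<iota> x \<in> U})"
    by (intro finitely_covered_Union) (auto simp: \<U>_def)
  then show ?thesis by (rule finitely_covered_subset) (use \<U>'(3) in blast)
qed

lemma finitely_covered_finite_vertices:
  assumes "finitely_covered A"
  shows "finite {v. Vert v \<in> A}"
proof -
  obtain Y F where YF: "finite Y" "finite F" "A \<subseteq> Y \<union> edge_points F"
    using assms unfolding finitely_covered_def by blast
  have "{v. Vert v \<in> A} \<subseteq> Vert -` Y \<union> src ` F \<union> tgt ` F"
  proof
    fix v assume "v \<in> {v. Vert v \<in> A}"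
    then consider "Vert v \<in> Y" | e s where "e \<in> F" "Vert v = ep src tgt len e s"
      using YF(3) unfolding edge_points_def by blast
    then show "v \<in> Vert -` Y \<union> src ` F \<union> tgt ` F"
      by cases (auto dest!: sym[THEN ep_eq_VertD])
  qed
  moreover have "finite (Vert -` Y)" using YF(1) by (rule finite_vimageI) (simp add: inj_def)
  ultimately show ?thesis using YF(2) by (meson finite_UnI finite_imageI finite_subset)
qed

lemma finitely_covered_finite_EPt_edges:
  assumes "finitely_covered A"
  shows "finite {e. \<exists>s. EPt e s \<in> A}"
proof -
  obtain Y F where YF: "finite Y" "finite F" "A \<subseteq> Y \<union> edge_points F"
    using assms unfolding finitely_covered_def by blast
  have "{e. \<exists>s. EPt e s \<in> A} \<subseteq> fst ` (case_prod EPt -` Y) \<union> F"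
  proof
    fix e assume "e \<in> {e. \<exists>s. EPt e s \<in> A}"
    then obtain s where "EPt e s \<in> Y \<union> edge_points F" using YF(3) by blast
    then show "e \<in> fst ` (case_prod EPt -` Y) \<union> F"
    proof
      assume "EPt e s \<in> Y"
      then have "e \<in> fst ` (case_prod EPt -` Y)" by (intro image_eqI[of _ _ "(e, s)"]) auto
      then show ?thesis by blast
    next
      assume "EPt e s \<in> edge_points F"
      then obtain e' s' where e': "e' \<in> F" "EPt e s = ep src tgt len e' s'"
        unfolding edge_points_def by blast
      then show ?thesis using ep_eq_EPtD[OF e'(2)[symmetric]] by blast
    qed
  qed
  moreover have "finite (case_prod EPt -` Y)" using YF(1) by (rule finite_vimageI) (simp add: inj_def)
  ultimately show ?thesis using YF(2) by (meson finite_UnI finite_imageI finite_subset)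
qed

lemma finitely_covered_finite_edges:
  assumes "finitely_covered A"
  shows "finite {e. \<exists>s\<in>{0..len e}. ep src tgt len e s \<in> A}"
proof -
  define V where "V = {v. Vert v \<in> A}"
  have "{e. \<exists>s\<in>{0..len e}. ep src tgt len e s \<in> A}
      \<subseteq> {e. src e \<in> V} \<union> {e. tgt e \<in> V} \<union> {e. \<exists>s. EPt e s \<in> A}"
    unfolding V_def ep_def by (auto split: if_splits)
  moreover have "finite V" unfolding V_def using assms by (rule finitely_covered_finite_vertices)
  ultimately show ?thesis
    using finitely_covered_finite_EPt_edges[OF assms] finite_edges_from_set finite_edges_to_set
    by (meson finite_UnI finite_subset)
qed

end

locale harmonic_graph_function = metric_graph src tgt len B \<iota>
  for src tgt :: "'e::countable \<Rightarrow> 'v::countable" and len B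
    and \<iota> :: "('v, 'e) gpoint \<Rightarrow> 'c::metric_space" +
  fixes f :: "'c \<Rightarrow> real"
  assumes harmonic: "harmonic src tgt len B \<iota> f"
begin

lemma slope_mult_len:
  "slope src tgt len \<iota> f e * len e = f (\<iota> (Vert (tgt e))) - f (\<iota> (Vert (src e)))"
  using len_pos[of e] unfolding slope_def by simp

lemma f_ep_linear:
  assumes "0 \<le> s" "s \<le> len e"
  shows "f (\<iota> (ep src tgt len e s)) = f (\<iota> (Vert (src e))) + slope src tgt len \<iota> f e * s"
proof -
  obtain a b where ab: "\<And>s. s \<in> {0..len e} \<Longrightarrow> f (\<iota> (ep src tgt len e s)) = a + b * s"
    using harmonic unfolding harmonic_def by blast
  have "ep src tgt len e 0 = Vert (src e)" "ep src tgt len e (len e) = Vert (tgt e)"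
    using len_pos[of e] by (simp_all add: ep_def)
  then have "f (\<iota> (Vert (src e))) = a" "f (\<iota> (Vert (tgt e))) = a + b * len e"
    using ab[of 0] ab[of "len e"] len_pos[of e] by simp_all
  then have "slope src tgt len \<iota> f e = b" using len_pos[of e] unfolding slope_def by simp
  then show ?thesis using ab assms \<open>f (\<iota> (Vert (src e))) = a\<close> by simp
qed

lemma continuous_on_f: "continuous_on UNIV f"
  using harmonic unfolding harmonic_def by blast

lemma bdd_below_f_image: "bdd_below (f ` A)"
proof -
  have "bdd_below (f ` UNIV)"
    by (intro bounded_imp_bdd_below compact_imp_bounded compact_continuous_image
        continuous_on_f compact_completion)
  then show ?thesis by (rule bdd_below_mono) auto
qed

lemma bdry_values_outside_slab:
  assumes "\<forall>p\<in>E. f p = C" "C < a" "b < Inf (f ` (bdry len B \<iota> - E))"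
  shows "\<forall>p\<in>bdry len B \<iota>. f p < a \<or> b < f p"
proof
  fix p assume p: "p \<in> bdry len B \<iota>"
  show "f p < a \<or> b < f p"
  proof (cases "p \<in> E")
    case True
    then show ?thesis using assms(1,2) by auto
  next
    case False
    then have "Inf (f ` (bdry len B \<iota> - E)) \<le> f p"
      using p bdd_below_f_image by (intro cInf_lower) auto
    then show ?thesis using assms(3) by linarith
  qed
qed

definition slab :: "real \<Rightarrow> real \<Rightarrow> ('v, 'e) gpoint set" where
  "slab a b = {x \<in> gpts len. a \<le> f (\<iota> x) \<and> f (\<iota> x) \<le> b}"

lemma finitely_covered_slab:
  assumes "\<forall>p\<in>bdry len B \<iota>. f p < a \<or> b < f p"
  shows "finitely_covered (slab a b)"
proof -
  have "compact (f -` {a..b})"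
    using compact_Int_closed[OF compact_completion closed_vimage[OF closed_atLeastAtMost continuous_on_f]]
    by simp
  moreover have "f -` {a..b} \<subseteq> \<iota> ` gpts len"
    using assms unfolding bdry_def G_int_def by force
  ultimately have "finitely_covered {x \<in> gpts len. \<iota> x \<in> f -` {a..b}}"
    by (rule compact_finitely_covered)
  then show ?thesis unfolding slab_def by simp
qed

lemma Vert_in_slab_iff:
  assumes "regular_value src tgt len \<iota> f a" "regular_value src tgt len \<iota> f b"
  shows "Vert v \<in> slab a b \<longleftrightarrow> a < f (\<iota> (Vert v)) \<and> f (\<iota> (Vert v)) < b"
  using regular_value_Vert[OF assms(1), of v] regular_value_Vert[OF assms(2), of v]
  unfolding slab_def by auto

definition crossing_edges :: "real \<Rightarrow> 'e set" where
  "crossing_edges t = {e. min (f (\<iota> (Vert (src e)))) (f (\<iota> (Vert (tgt e)))) < t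
                        \<and> t < max (f (\<iota> (Vert (src e)))) (f (\<iota> (Vert (tgt e))))}"

definition crossing_point :: "real \<Rightarrow> 'e \<Rightarrow> ('v, 'e) gpoint" where
  "crossing_point t e = EPt e ((t - f (\<iota> (Vert (src e)))) / slope src tgt len \<iota> f e)"

lemma crossing_edges_iff:
  "e \<in> crossing_edges t \<longleftrightarrow> slope src tgt len \<iota> f e \<noteq> 0
     \<and> 0 < (t - f (\<iota> (Vert (src e)))) / slope src tgt len \<iota> f e
     \<and> (t - f (\<iota> (Vert (src e)))) / slope src tgt len \<iota> f e < len e"
  unfolding crossing_edges_def using linear_crossing_iff[OF len_pos slope_mult_len] by simp

lemma crossing_point_in_level:
  assumes "e \<in> crossing_edges t"
  shows "crossing_point t e \<in> level len \<iota> f t"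
proof -
  define s where "s = (t - f (\<iota> (Vert (src e)))) / slope src tgt len \<iota> f e"
  have s: "slope src tgt len \<iota> f e \<noteq> 0" "0 < s" "s < len e"
    using assms unfolding crossing_edges_iff s_def by auto
  then have "f (\<iota> (EPt e s)) = t"
    using f_ep_linear[of s e] by (simp add: ep_interior s_def)
  then show ?thesis using s unfolding level_def crossing_point_def s_def[symmetric] gpts_def by simp
qed

lemma level_point_is_crossing_point:
  assumes "regular_value src tgt len \<iota> f t" "x \<in> level len \<iota> f t"
  obtains e where "e \<in> crossing_edges t" "x = crossing_point t e"
proof (cases x)
  case (Vert v)
  then have "f (\<iota> (Vert v)) = t" using assms(2) unfolding level_def by simp
  with regular_value_Vert[OF assms(1)] show thesis by contradiction
next
  case (EPt e s)
  have s: "0 < s" "s < len e" and x: "f (\<iota> (EPt e s)) = t"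
    using assms(2) EPt unfolding level_def gpts_def by auto
  have m: "slope src tgt len \<iota> f e \<noteq> 0" using regular_value_slope[OF assms(1) s x] .
  have "f (\<iota> (Vert (src e))) + slope src tgt len \<iota> f e * s = t"
    using f_ep_linear[of s e] s x by (simp add: ep_interior)
  then have "s = (t - f (\<iota> (Vert (src e)))) / slope src tgt len \<iota> f e"
    using m by (simp add: field_simps)
  then have "e \<in> crossing_edges t" "x = crossing_point t e"
    using s m EPt unfolding crossing_edges_iff crossing_point_def by simp_all
  then show thesis by (rule that)
qed

lemma bij_betw_crossing_point:
  assumes "regular_value src tgt len \<iota> f t"
  shows "bij_betw (crossing_point t) (crossing_edges t) (level len \<iota> f t)"
proof (rule bij_betw_imageI)
  show "inj_on (crossing_point t) (crossing_edges t)"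
    unfolding inj_on_def crossing_point_def by simp
  show "crossing_point t ` crossing_edges t = level len \<iota> f t"
  proof
    show "crossing_point t ` crossing_edges t \<subseteq> level len \<iota> f t"
      using crossing_point_in_level by blast
    show "level len \<iota> f t \<subseteq> crossing_point t ` crossing_edges t"
    proof
      fix x assume "x \<in> level len \<iota> f t"
      then obtain e where "e \<in> crossing_edges t" "x = crossing_point t e"
        using level_point_is_crossing_point[OF assms] by metis
      then show "x \<in> crossing_point t ` crossing_edges t" by blast
    qed
  qed
qed

lemma level_point_EPt:
  assumes "regular_value src tgt len \<iota> f t" "x \<in> level len \<iota> f t"
  shows "\<exists>e s. x = EPt e s"
  using level_point_is_crossing_point[OF assms] unfolding crossing_point_def by metis

lemma finite_level_iff:
  "regular_value src tgt len \<iota> f t \<Longrightarrow> finite (level len \<iota> f t) \<longleftrightarrow> finite (crossing_edges t)"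
  using bij_betw_finite[OF bij_betw_crossing_point] by metis

lemma crossing_edges_subset_slab:
  assumes "a \<le> t" "t \<le> b"
  shows "crossing_edges t \<subseteq> {e. \<exists>s\<in>{0..len e}. ep src tgt len e s \<in> slab a b}"
proof
  fix e assume e: "e \<in> crossing_edges t"
  then obtain s where "0 < s" "s < len e" "crossing_point t e = EPt e s"
    unfolding crossing_edges_iff crossing_point_def by blast
  moreover have "crossing_point t e \<in> slab a b"
    using crossing_point_in_level[OF e] assms unfolding level_def slab_def by simp
  ultimately show "e \<in> {e. \<exists>s\<in>{0..len e}. ep src tgt len e s \<in> slab a b}"
    by (intro CollectI bexI[of _ s]) (auto simp: ep_interior)
qed

lemma level_flux_crossing_point:
  assumes "e \<in> crossing_edges t"
  shows "level_flux src tgt len \<iota> f t (crossing_point t e) = \<bar>slope src tgt len \<iota> f e\<bar>"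
proof -
  define m where "m = slope src tgt len \<iota> f e"
  define s where "s = (t - f (\<iota> (Vert (src e)))) / m"
  have s: "m \<noteq> 0" "0 < s" "s < len e"
    using assms unfolding crossing_edges_iff s_def m_def by auto
  have "f (\<iota> (Vert (src e))) + m * s = t" using s(1) unfolding s_def by simp
  then have f_near: "f (\<iota> (ep src tgt len e (s + h))) = t + m * h" if "0 < h" "h < len e - s" for h
    using f_ep_linear[of "s + h" e, folded m_def] s that by (simp add: algebra_simps)
  have "eventually (\<lambda>h. t \<le> f (\<iota> (ep src tgt len e (s + h)))) (at_right 0) \<longleftrightarrow> 0 < m"
  proof
    assume "eventually (\<lambda>h. t \<le> f (\<iota> (ep src tgt len e (s + h)))) (at_right 0)"
    then obtain b where b: "0 < b" "\<And>h. 0 < h \<Longrightarrow> h < b \<Longrightarrow> t \<le> f (\<iota> (ep src tgt len e (s + h)))"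
      unfolding eventually_at_right_field by auto
    define h where "h = min b (len e - s) / 2"
    have "0 < h" "h < b" "h < len e - s" using b(1) s(3) unfolding h_def by auto
    then have "t \<le> t + m * h" using b(2)[of h] f_near[of h] by simp
    then have "0 \<le> m * h" by simp
    then show "0 < m" using \<open>0 < h\<close> s(1) by (simp add: zero_le_mult_iff)
  next
    assume "0 < m"
    then show "eventually (\<lambda>h. t \<le> f (\<iota> (ep src tgt len e (s + h)))) (at_right 0)"
      unfolding eventually_at_right_field using s(3) f_near
      by (intro exI[of _ "len e - s"]) auto
  qed
  then show ?thesis unfolding level_flux_def crossing_point_def m_def[symmetric] s_def[symmetric]
    by (simp add: m_def)
qed

lemma sum_level_flux:
  assumes "regular_value src tgt len \<iota> f t"
  shows "(\<Sum>x\<in>level len \<iota> f t. level_flux src tgt len \<iota> f t x)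
    = (\<Sum>e\<in>crossing_edges t. \<bar>slope src tgt len \<iota> f e\<bar>)"
proof -
  have "(\<Sum>x\<in>level len \<iota> f t. level_flux src tgt len \<iota> f t x)
      = (\<Sum>e\<in>crossing_edges t. level_flux src tgt len \<iota> f t (crossing_point t e))"
    by (rule sum.reindex_bij_betw[OF bij_betw_crossing_point[OF assms], symmetric])
  then show ?thesis using level_flux_crossing_point by simp
qed

lemma sum_slope_out_eq_in:
  assumes "finite V" "V \<inter> B = {}"
  shows "(\<Sum>e | src e \<in> V. slope src tgt len \<iota> f e) = (\<Sum>e | tgt e \<in> V. slope src tgt len \<iota> f e)"
proof -
  let ?m = "slope src tgt len \<iota> f"
  have kirchhoff: "\<forall>v. v \<notin> B \<longrightarrow> (\<Sum>e | src e = v. ?m e) + (\<Sum>e | tgt e = v. - ?m e) = 0"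
    using harmonic unfolding harmonic_def by (elim conjE)
  have group: "(\<Sum>e | h e \<in> V. ?m e) = (\<Sum>v\<in>V. \<Sum>e | h e = v. ?m e)"
    if "finite {e. h e \<in> V}" for h :: "'e \<Rightarrow> 'v"
  proof -
    have "(\<Sum>v\<in>V. \<Sum>e | h e = v. ?m e) = (\<Sum>v\<in>V. \<Sum>e | h e \<in> V \<and> h e = v. ?m e)"
      by (intro sum.cong) auto
    also have "\<dots> = (\<Sum>e | h e \<in> V. ?m e)"
      using sum.group[OF that assms(1), of h ?m] by auto
    finally show ?thesis by simp
  qed
  have "(\<Sum>e | src e = v. ?m e) = (\<Sum>e | tgt e = v. ?m e)" if "v \<in> V" for v
  proof -
    have "v \<notin> B" using that assms(2) by blast
    from kirchhoff[rule_format, OF this] show ?thesis by (simp add: sum_negf)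
  qed
  then show ?thesis
    unfolding group[OF finite_edges_from_set[OF assms(1)]] group[OF finite_edges_to_set[OF assms(1)]]
    by (rule sum.cong[OF refl])
qed

lemma level_flux_sums_eq:
  assumes reg1: "regular_value src tgt len \<iota> f t1" and reg2: "regular_value src tgt len \<iota> f t2"
    and "t2 < t1"
    and fin1: "finite (crossing_edges t1)" and fin2: "finite (crossing_edges t2)"
    and finV: "finite {v. Vert v \<in> slab t2 t1}"
    and interior: "{v. Vert v \<in> slab t2 t1} \<inter> B = {}"
  shows "(\<Sum>x\<in>level len \<iota> f t1. level_flux src tgt len \<iota> f t1 x)
       = (\<Sum>x\<in>level len \<iota> f t2. level_flux src tgt len \<iota> f t2 x)"
proof -
  let ?m = "slope src tgt len \<iota> f"
  define V where "V = {v. Vert v \<in> slab t2 t1}"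
  define Ed where "Ed = crossing_edges t1 \<union> crossing_edges t2 \<union> {e. src e \<in> V} \<union> {e. tgt e \<in> V}"
  have "finite V" using finV unfolding V_def .
  then have "finite Ed"
    unfolding Ed_def using fin1 fin2 finite_edges_from_set finite_edges_to_set by simp
  have restrict: "(\<Sum>e\<in>Ed. if P e then g e else 0) = (\<Sum>e | P e. g e)" if "{e. P e} \<subseteq> Ed"
    for P and g :: "'e \<Rightarrow> real"
    using sum.inter_filter[OF \<open>finite Ed\<close>, of g P] that by (simp add: Collect_conj_eq Int_absorb1)
  have in_Ed: "{e. src e \<in> V} \<subseteq> Ed" "{e. tgt e \<in> V} \<subseteq> Ed"
    "{e. e \<in> crossing_edges t1} \<subseteq> Ed" "{e. e \<in> crossing_edges t2} \<subseteq> Ed"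
    unfolding Ed_def by auto
  have outflow: "(if src e \<in> V then ?m e else 0) - (if tgt e \<in> V then ?m e else 0)
      = (if e \<in> crossing_edges t1 then \<bar>?m e\<bar> else 0) - (if e \<in> crossing_edges t2 then \<bar>?m e\<bar> else 0)"
    for e
    using slab_outflow_eq_crossings[OF len_pos slope_mult_len \<open>t2 < t1\<close>]
      regular_value_Vert[OF reg1] regular_value_Vert[OF reg2]
    unfolding V_def Vert_in_slab_iff[OF reg2 reg1] crossing_edges_def by simp
  have "(\<Sum>e | src e \<in> V. ?m e) = (\<Sum>e | tgt e \<in> V. ?m e)"
    using sum_slope_out_eq_in[OF \<open>finite V\<close>] interior unfolding V_def by blast
  then have "(\<Sum>e\<in>Ed. (if src e \<in> V then ?m e else 0) - (if tgt e \<in> V then ?m e else 0)) = 0"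
    by (simp add: sum_subtractf restrict[OF in_Ed(1)] restrict[OF in_Ed(2)])
  then have "(\<Sum>e\<in>Ed. if e \<in> crossing_edges t1 then \<bar>?m e\<bar> else 0)
      = (\<Sum>e\<in>Ed. if e \<in> crossing_edges t2 then \<bar>?m e\<bar> else 0)"
    unfolding outflow by (simp add: sum_subtractf)
  then show ?thesis
    by (simp add: sum_level_flux[OF reg1] sum_level_flux[OF reg2]
        restrict[OF in_Ed(3)] restrict[OF in_Ed(4)])
qed

end

theorem lemma3p12:
  fixes src tgt :: "'e::countable \<Rightarrow> 'v::countable"
    and len :: "'e \<Rightarrow> real" and B :: "'v set"
    and \<iota> :: "('v, 'e) gpoint \<Rightarrow> 'c::metric_space"
    and f :: "'c \<Rightarrow> real" and E :: "'c set"
    and C \<epsilon> t1 t2 :: real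
  assumes setting: "metric_graph_setting src tgt len B \<iota>"
    and E_sub: "E \<subseteq> bdry len B \<iota>"
    and E_open: "openin (top_of_set (bdry len B \<iota>)) E"
    and E_closed: "closedin (top_of_set (bdry len B \<iota>)) E"
    and E_ne: "E \<noteq> {}"
    and Ec_ne: "bdry len B \<iota> - E \<noteq> {}"
    and harm: "harmonic src tgt len B \<iota> f"
    and C_nonneg: "C \<ge> 0"
    and f_E: "\<forall>x\<in>E. f x = C"
    and f_Ec: "\<forall>x\<in>bdry len B \<iota> - E. f x > C"
    and eps: "\<epsilon> > 0"
    and reg1: "regular_value src tgt len \<iota> f t1"
    and reg2: "regular_value src tgt len \<iota> f t2"
    and order: "C < t2" "t2 < t1" "t1 < Inf (f ` (bdry len B \<iota> - E))"
    and near1: "\<forall>x. f x \<le> t1 \<longrightarrow> infdist x E < \<epsilon>"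
    and near2: "\<forall>x. f x \<le> t2 \<longrightarrow> infdist x E < \<epsilon>"
  shows "(let G2 = {x \<in> gpts len. t2 \<le> f (\<iota> x) \<and> f (\<iota> x) \<le> t1} in
            finite (level len \<iota> f t1) \<and> finite (level len \<iota> f t2)
          \<and> (\<forall>x \<in> level len \<iota> f t1 \<union> level len \<iota> f t2. \<exists>e s. x = EPt e s)
          \<and> finite {v. Vert v \<in> G2}
          \<and> finite {e. \<exists>s\<in>{0..len e}. ep src tgt len e s \<in> G2}
          \<and> (\<forall>v\<in>B. Vert v \<notin> G2)
          \<and> (\<Sum>x\<in>level len \<iota> f t1. level_flux src tgt len \<iota> f t1 x)
            = (\<Sum>x\<in>level len \<iota> f t2. level_flux src tgt len \<iota> f t2 x))"
proof -
  \<comment> \<open>Of the hypotheses on \<open>E\<close> and \<open>\<epsilon>\<close> only the boundary values of \<open>f\<close> are needed.\<close>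
  interpret harmonic_graph_function src tgt len B \<iota> f
    using setting harm
    by (simp add: harmonic_graph_function_def harmonic_graph_function_axioms_def metric_graph_def)
  have bdry_values: "\<forall>p\<in>bdry len B \<iota>. f p < t2 \<or> t1 < f p"
    using f_E order(1,3) by (rule bdry_values_outside_slab)
  have cover: "finitely_covered (slab t2 t1)"
    using bdry_values by (rule finitely_covered_slab)
  have edges: "finite {e. \<exists>s\<in>{0..len e}. ep src tgt len e s \<in> slab t2 t1}"
    using cover by (rule finitely_covered_finite_edges)
  have crossing: "finite (crossing_edges t1)" "finite (crossing_edges t2)"
    using finite_subset[OF crossing_edges_subset_slab edges] order(2) by simp_all
  have no_B: "\<forall>v\<in>B. Vert v \<notin> slab t2 t1"
    using iota_Vert_in_bdry bdry_values unfolding slab_def by force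
  then have "{v. Vert v \<in> slab t2 t1} \<inter> B = {}" by blast
  then show ?thesis
    unfolding Let_def slab_def[symmetric]
    using finite_level_iff[OF reg1] finite_level_iff[OF reg2] crossing
      level_point_EPt[OF reg1] level_point_EPt[OF reg2] finitely_covered_finite_vertices[OF cover]
      edges no_B level_flux_sums_eq[OF reg1 reg2 order(2) crossing finitely_covered_finite_vertices[OF cover]]
    by blast
qed

end
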